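(* Let $(\mathbf{i},\mathbf{a})\in I^m\times\mathbb{C}^m$, let $\pi\in S_m$ be $(\mathbf{i},\mathbf{a})$-admissible, and let $\pi=s_{k_r}\cdots s_{k_1}$ be a reduced expression in simple transpositions. Then for each $1\le p\le r$, $s_{k_p}$ is $(s_{k_p}\cdots s_{k_1}(\mathbf{i}),\,s_{k_p}\cdots s_{k_1}(\mathbf{a}))$-admissible.
   Context: $I$ is the vertex set of a finite simple bipartite graph $I=I_{\bar0}\sqcup I_{\bar1}$, with every edge oriented from its even to its odd endpoint; write $i\leftarrow j$ if there is an oriented edge from $j$ to $i$. $S_m$ acts on $m$-tuples by $\pi(\mathbf{a})=(a_{\pi^{-1}(1)},\dots,a_{\pi^{-1}(m)})$; $s_k=(k,k+1)$. For $(\mathbf{i},\mathbf{a})\in I^m\times\mathbb{C}^m$, distinct indices $k,l$ are not $(\mathbf{i},\mathbf{a})$-switchable if $i_k\leftarrow i_l$ and $a_k=a_l+1$ (checked for the pair in either order), and switchable otherwise. $\pi\in S_m$ is $(\mathbf{i},\mathbf{a})$-admissible if for every non-switchable pair $k,l$, $\pi(k),\pi(l)$ are in the same relative order as $k,l$. *)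

theory Defs
  imports Complex_Main "HOL-Combinatorics.Permutations"
begin

definition bipartite_graph :: "'v set \<Rightarrow> 'v set \<Rightarrow> 'v set \<Rightarrow> ('v \<Rightarrow> 'v \<Rightarrow> bool) \<Rightarrow> bool" where
  "bipartite_graph VI VI0 VI1 E \<longleftrightarrow>
     finite VI \<and> VI = VI0 \<union> VI1 \<and> VI0 \<inter> VI1 = {} \<and>
     (\<forall>x y. E x y \<longrightarrow> x \<in> VI \<and> y \<in> VI) \<and>
     (\<forall>x y. E x y \<longrightarrow> E y x) \<and> (\<forall>x. \<not> E x x) \<and>
     (\<forall>x y. E x y \<longrightarrow> (x \<in> VI0 \<and> y \<in> VI1) \<or> (x \<in> VI1 \<and> y \<in> VI0))"

text \<open>Edges are oriented from the even to the odd endpoint;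
  arrow VI0 VI1 E i j means  i \<leftarrow> j, i.e. there is an oriented edge from j to i.\<close>
definition arrow :: "'v set \<Rightarrow> 'v set \<Rightarrow> ('v \<Rightarrow> 'v \<Rightarrow> bool) \<Rightarrow> 'v \<Rightarrow> 'v \<Rightarrow> bool" where
  "arrow VI0 VI1 E i j \<longleftrightarrow> E j i \<and> j \<in> VI0 \<and> i \<in> VI1"

text \<open>m-tuples are functions on positions 1..m.  A permutation \<pi> of {1..m}
  acts by \<pi>(a) = (a (inv \<pi> 1), ..., a (inv \<pi> m)).\<close>
definition act :: "(nat \<Rightarrow> nat) \<Rightarrow> (nat \<Rightarrow> 'b) \<Rightarrow> (nat \<Rightarrow> 'b)" where
  "act \<pi> x = (\<lambda>k. x (inv \<pi> k))"

definition sk :: "nat \<Rightarrow> nat \<Rightarrow> nat" where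
  "sk k = Transposition.transpose k (k + 1)"

definition switchable :: "'v set \<Rightarrow> 'v set \<Rightarrow> ('v \<Rightarrow> 'v \<Rightarrow> bool) \<Rightarrow>
    (nat \<Rightarrow> 'v) \<Rightarrow> (nat \<Rightarrow> complex) \<Rightarrow> nat \<Rightarrow> nat \<Rightarrow> bool" where
  "switchable VI0 VI1 E i a k l \<longleftrightarrow>
     \<not> ((arrow VI0 VI1 E (i k) (i l) \<and> a k = a l + 1) \<or>
        (arrow VI0 VI1 E (i l) (i k) \<and> a l = a k + 1))"

definition admissible :: "nat \<Rightarrow> 'v set \<Rightarrow> 'v set \<Rightarrow> ('v \<Rightarrow> 'v \<Rightarrow> bool) \<Rightarrow>
    (nat \<Rightarrow> 'v) \<Rightarrow> (nat \<Rightarrow> complex) \<Rightarrow> (nat \<Rightarrow> nat) \<Rightarrow> bool" where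
  "admissible m VI0 VI1 E i a \<pi> \<longleftrightarrow>
     (\<forall>k\<in>{1..m}. \<forall>l\<in>{1..m}. k \<noteq> l \<and> \<not> switchable VI0 VI1 E i a k l \<longrightarrow>
        (k < l \<longleftrightarrow> \<pi> k < \<pi> l))"

text \<open>For ks = [k_1, ..., k_r], word_prod ks = s_{k_r} \<circ> ... \<circ> s_{k_1}.\<close>
definition word_prod :: "nat list \<Rightarrow> nat \<Rightarrow> nat" where
  "word_prod ks = fold (\<lambda>k acc. sk k \<circ> acc) ks id"

definition is_word :: "nat \<Rightarrow> nat list \<Rightarrow> bool" where
  "is_word m ks \<longleftrightarrow> (\<forall>k\<in>set ks. 1 \<le> k \<and> k < m)"

definition reduced_expr :: "nat \<Rightarrow> (nat \<Rightarrow> nat) \<Rightarrow> nat list \<Rightarrow> bool" where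
  "reduced_expr m \<pi> ks \<longleftrightarrow> is_word m ks \<and> word_prod ks = \<pi> \<and>
     (\<forall>ks'. is_word m ks' \<and> word_prod ks' = \<pi> \<longrightarrow> length ks \<le> length ks')"

end

theory Submission
  imports Defs
begin

text \<open>Write W_p for the prefix product s_{k_p} \<dots> s_{k_1}. The letter s_{k_p} exchanges the two
  entries that started at the positions u = W_{p-1}^{-1}(k_p) and v = W_{p-1}^{-1}(k_p + 1), and
  in a reduced word no pair of entries is exchanged twice: two such letters act as the same
  transposition of the original positions, so deleting both gives a shorter word for \<pi>.
  Hence u < v and \<pi> v < \<pi> u, so u, v is switchable by admissibility of \<pi>. It is exactly
  the pair k_p, k_p + 1 for the permuted data, the only pair whose order s_{k_p} reverses.\<close>

lemma word_prod_Nil [simp]: "word_prod [] = id"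
  by (simp add: word_prod_def)

lemma word_prod_append: "word_prod (xs @ ys) = word_prod ys \<circ> word_prod xs"
proof -
  have "fold (\<lambda>k acc. sk k \<circ> acc) ys f = fold (\<lambda>k acc. sk k \<circ> acc) ys id \<circ> f" for f
    by (induction ys arbitrary: f rule: rev_induct) (simp_all add: comp_assoc)
  then show ?thesis
    by (simp add: word_prod_def)
qed

lemma word_prod_Cons: "word_prod (k # ks) = word_prod ks \<circ> sk k"
  using word_prod_append[of "[k]" ks] by (simp add: word_prod_def)

lemma word_prod_take_Suc:
  "j < length ks \<Longrightarrow> word_prod (take (Suc j) ks) = sk (ks ! j) \<circ> word_prod (take j ks)"
  by (simp add: take_Suc_conv_app_nth word_prod_append word_prod_Cons)

lemma bij_sk: "bij (sk k)"
  by (simp add: sk_def)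

lemma inv_sk [simp]: "inv (sk k) = sk k"
  by (simp add: sk_def)

lemma bij_word_prod: "bij (word_prod ks)"
proof (induction ks)
  case (Cons k ks)
  then show ?case
    unfolding word_prod_Cons using bij_sk by (rule bij_comp[rotated])
qed (simp only: word_prod_Nil bij_id)

lemma word_prod_permutes: "is_word m ks \<Longrightarrow> word_prod ks permutes {1..m}"
proof (induction ks)
  case (Cons k ks)
  then have "sk k permutes {1..m}"
    unfolding sk_def is_word_def by (intro permutes_swap_id) auto
  moreover have "word_prod ks permutes {1..m}"
    using Cons by (simp add: is_word_def)
  ultimately show ?case
    unfolding word_prod_Cons by (rule permutes_compose)
qed (simp add: permutes_id)

lemma sk_less_sk_iff:
  "a \<noteq> b \<Longrightarrow> {a, b} \<noteq> {k, Suc k} \<Longrightarrow> sk k a < sk k b \<longleftrightarrow> a < b"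
  unfolding sk_def Transposition.transpose_def by auto

lemma sk_comp_eq:
  assumes "bij w" and "{w x, w y} = {k, Suc k}"
  shows "sk k \<circ> w = w \<circ> Transposition.transpose x y"
proof -
  have "{x, y} = inv w ` {w x, w y}"
    using bij_is_inj[OF assms(1)] by simp
  then have "{inv w k, inv w (Suc k)} = {x, y}"
    using assms(2) by simp
  then have "Transposition.transpose (inv w k) (inv w (Suc k)) = Transposition.transpose x y"
    by (auto simp: doubleton_eq_iff transpose_commute)
  then show ?thesis
    using transpose_comp_eq[OF assms(1)] by (simp add: sk_def)
qed

lemma word_prod_cancel_pair:
  assumes "sk k \<circ> word_prod xs = word_prod xs \<circ> t"
    and "sk l \<circ> word_prod (xs @ k # ys) = word_prod (xs @ k # ys) \<circ> t"
    and "t \<circ> t = id"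
  shows "word_prod (xs @ k # ys @ l # zs) = word_prod (xs @ ys @ zs)"
proof -
  have "word_prod (xs @ k # ys @ l # zs) = word_prod zs \<circ> (sk l \<circ> word_prod (xs @ k # ys))"
    by (simp add: word_prod_append word_prod_Cons comp_assoc)
  also have "\<dots> = word_prod zs \<circ> (word_prod (xs @ k # ys) \<circ> t)"
    by (simp only: assms(2))
  also have "\<dots> = word_prod zs \<circ> word_prod ys \<circ> (sk k \<circ> word_prod xs) \<circ> t"
    by (simp add: word_prod_append word_prod_Cons comp_assoc)
  also have "\<dots> = word_prod zs \<circ> word_prod ys \<circ> word_prod xs \<circ> (t \<circ> t)"
    by (simp add: assms(1) comp_assoc)
  also have "\<dots> = word_prod (xs @ ys @ zs)"
    by (simp add: assms(3) word_prod_append comp_assoc)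
  finally show ?thesis .
qed

lemma take_eq_take_nth_drop:
  "j < l \<Longrightarrow> l \<le> length xs \<Longrightarrow> take l xs = take j xs @ xs ! j # drop (Suc j) (take l xs)"
  using id_take_nth_drop[of j "take l xs"] by (simp add: min_def)

lemma take_nth_drop_split:
  assumes "j < l" "l < length xs"
  shows "xs = take j xs @ xs ! j # drop (Suc j) (take l xs) @ xs ! l # drop (Suc l) xs"
proof -
  define ys where "ys = drop (Suc j) (take l xs)"
  have prefix: "take l xs = take j xs @ xs ! j # ys"
    unfolding ys_def using assms by (intro take_eq_take_nth_drop) simp_all
  have "xs = take l xs @ xs ! l # drop (Suc l) xs"
    using assms by (intro id_take_nth_drop)
  also have "\<dots> = take j xs @ xs ! j # ys @ xs ! l # drop (Suc l) xs"
    by (simp add: prefix)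
  finally show ?thesis
    unfolding ys_def .
qed

text \<open>The j-th letter of ks exchanges the entries that started at positions x and y.\<close>
definition swaps_at :: "nat list \<Rightarrow> nat \<Rightarrow> nat \<Rightarrow> nat \<Rightarrow> bool" where
  "swaps_at ks j x y \<longleftrightarrow> {word_prod (take j ks) x, word_prod (take j ks) y} = {ks ! j, Suc (ks ! j)}"

lemma reduced_expr_swaps_at_most_once:
  assumes red: "reduced_expr m \<pi> ks" and "j < l" "l < length ks" "x \<noteq> y"
    and "swaps_at ks j x y" "swaps_at ks l x y"
  shows False
proof -
  define xs ys zs where "xs = take j ks" "ys = drop (Suc j) (take l ks)" "zs = drop (Suc l) ks"
  have split: "ks = xs @ ks ! j # ys @ ks ! l # zs"
    unfolding xs_ys_zs_def using assms(2,3) by (rule take_nth_drop_split)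
  have prefix_l: "take l ks = xs @ ks ! j # ys"
    unfolding xs_ys_zs_def using assms(2,3) by (intro take_eq_take_nth_drop) simp_all
  have "word_prod ks = word_prod (xs @ ks ! j # ys @ ks ! l # zs)"
    using split by (rule arg_cong)
  also have "\<dots> = word_prod (xs @ ys @ zs)"
  proof (rule word_prod_cancel_pair)
    show "sk (ks ! j) \<circ> word_prod xs = word_prod xs \<circ> Transposition.transpose x y"
      using assms(5) unfolding swaps_at_def xs_ys_zs_def by (intro sk_comp_eq bij_word_prod)
    show "sk (ks ! l) \<circ> word_prod (xs @ ks ! j # ys) =
        word_prod (xs @ ks ! j # ys) \<circ> Transposition.transpose x y"
      using assms(6) unfolding swaps_at_def prefix_l by (intro sk_comp_eq bij_word_prod)
  qed simp
  finally have same_product: "word_prod (xs @ ys @ zs) = \<pi>"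
    using red by (simp add: reduced_expr_def)
  have "set (xs @ ys @ zs) \<subseteq> set ks"
    unfolding xs_ys_zs_def by (auto dest: in_set_takeD in_set_dropD)
  then have "is_word m (xs @ ys @ zs)"
    using red unfolding reduced_expr_def is_word_def by blast
  with same_product red have "length ks \<le> length (xs @ ys @ zs)"
    unfolding reduced_expr_def by blast
  moreover have "length (xs @ ys @ zs) < length ks"
    using assms(2,3) by (simp add: xs_ys_zs_def)
  ultimately show False
    by simp
qed

lemma swaps_at_commute: "swaps_at ks j x y \<longleftrightarrow> swaps_at ks j y x"
  by (simp add: swaps_at_def insert_commute)

lemma word_prod_take_less_iff_if_no_swap:
  assumes "x \<noteq> y" and "n0 \<le> n" and "n \<le> length ks"
    and "\<And>j. n0 \<le> j \<Longrightarrow> j < n \<Longrightarrow> \<not> swaps_at ks j x y"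
  shows "word_prod (take n ks) x < word_prod (take n ks) y \<longleftrightarrow>
    word_prod (take n0 ks) x < word_prod (take n0 ks) y"
  using assms(2)
proof (induction n rule: dec_induct)
  case (step j)
  have "word_prod (take j ks) x \<noteq> word_prod (take j ks) y"
    using assms(1) bij_is_inj[OF bij_word_prod] by (auto dest: injD)
  moreover have "\<not> swaps_at ks j x y"
    using step.hyps by (intro assms(4)) simp_all
  ultimately show ?case
    using step assms(3) by (simp add: word_prod_take_Suc swaps_at_def sk_less_sk_iff)
qed simp

lemma reduced_expr_swapped_pair_inverted:
  assumes red: "reduced_expr m \<pi> ks" and q: "q < length ks"
    and x: "word_prod (take q ks) x = ks ! q" and y: "word_prod (take q ks) y = Suc (ks ! q)"
  shows "x < y \<and> \<pi> y < \<pi> x"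
proof -
  have "x \<noteq> y"
    using x y by auto
  have no_other_swap: "\<not> swaps_at ks j x y" if "j < length ks" "j \<noteq> q" for j
  proof
    assume "swaps_at ks j x y"
    moreover have "swaps_at ks q x y"
      using x y by (simp add: swaps_at_def)
    ultimately show False
      using that q \<open>x \<noteq> y\<close> reduced_expr_swaps_at_most_once[OF red]
      by (cases j q rule: linorder_cases) blast+
  qed
  have "x < y \<longleftrightarrow> word_prod (take q ks) x < word_prod (take q ks) y"
    using word_prod_take_less_iff_if_no_swap[OF \<open>x \<noteq> y\<close>, of 0 q ks] q no_other_swap by simp
  then have "x < y"
    using x y by simp
  have "word_prod (take (Suc q) ks) y < word_prod (take (Suc q) ks) x"
    using x y q by (simp add: word_prod_take_Suc sk_def)
  moreover have "word_prod (take (length ks) ks) y < word_prod (take (length ks) ks) x \<longleftrightarrow>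
      word_prod (take (Suc q) ks) y < word_prod (take (Suc q) ks) x"
    using q no_other_swap \<open>x \<noteq> y\<close>
    by (intro word_prod_take_less_iff_if_no_swap) (auto simp: swaps_at_commute)
  ultimately have "\<pi> y < \<pi> x"
    using red by (simp add: reduced_expr_def)
  with \<open>x < y\<close> show ?thesis ..
qed

lemma switchable_commute:
  "switchable VI0 VI1 E i a k l \<longleftrightarrow> switchable VI0 VI1 E i a l k"
  unfolding switchable_def by auto

lemma switchable_act:
  "switchable VI0 VI1 E (act w i) (act w a) k l \<longleftrightarrow>
    switchable VI0 VI1 E i a (inv w k) (inv w l)"
  unfolding switchable_def act_def by simp

lemma admissible_switchable_if_inverted:
  assumes "admissible m VI0 VI1 E i a \<pi>" and "x \<in> {1..m}" "y \<in> {1..m}"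
    and "x < y" "\<pi> y < \<pi> x"
  shows "switchable VI0 VI1 E i a x y"
proof (rule ccontr)
  assume "\<not> switchable VI0 VI1 E i a x y"
  moreover have "x \<noteq> y"
    using assms(4) by simp
  ultimately have "x < y \<longleftrightarrow> \<pi> x < \<pi> y"
    using assms(1-3) unfolding admissible_def by blast
  with assms(4,5) show False
    by simp
qed

lemma admissible_sk_if_switchable:
  assumes "switchable VI0 VI1 E i a k (Suc k)"
  shows "admissible m VI0 VI1 E i a (sk k)"
  unfolding admissible_def
proof (intro ballI impI)
  fix x y assume xy: "x \<noteq> y \<and> \<not> switchable VI0 VI1 E i a x y"
  have "{x, y} \<noteq> {k, Suc k}"
  proof
    assume "{x, y} = {k, Suc k}"
    then have "x = k \<and> y = Suc k \<or> x = Suc k \<and> y = k"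
      by (simp add: doubleton_eq_iff)
    with xy assms show False
      using switchable_commute by metis
  qed
  with xy show "x < y \<longleftrightarrow> sk k x < sk k y"
    by (simp add: sk_less_sk_iff)
qed

lemma reduced_expr_letter_switchable:
  assumes red: "reduced_expr m \<pi> ks" and adm: "admissible m VI0 VI1 E i a \<pi>"
    and q: "q < length ks"
  defines "w \<equiv> word_prod (take q ks)"
  shows "switchable VI0 VI1 E i a (inv w (ks ! q)) (inv w (Suc (ks ! q)))"
proof (rule admissible_switchable_if_inverted[OF adm])
  have "is_word m (take q ks)"
    using red by (auto simp: reduced_expr_def is_word_def dest: in_set_takeD)
  then have w_perm: "w permutes {1..m}"
    unfolding w_def by (rule word_prod_permutes)
  have "ks ! q \<in> set ks"
    using q by simp
  then have "ks ! q \<in> {1..m}" "Suc (ks ! q) \<in> {1..m}"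
    using red by (auto simp: reduced_expr_def is_word_def)
  then show "inv w (ks ! q) \<in> {1..m}" "inv w (Suc (ks ! q)) \<in> {1..m}"
    by (simp_all only: permutes_in_image[OF permutes_inv[OF w_perm]])
  have "w (inv w (ks ! q)) = ks ! q" "w (inv w (Suc (ks ! q))) = Suc (ks ! q)"
    using w_perm by (simp_all add: permutes_inverses)
  then have "inv w (ks ! q) < inv w (Suc (ks ! q)) \<and> \<pi> (inv w (Suc (ks ! q))) < \<pi> (inv w (ks ! q))"
    unfolding w_def by (rule reduced_expr_swapped_pair_inverted[OF red q])
  then show "inv w (ks ! q) < inv w (Suc (ks ! q))" "\<pi> (inv w (Suc (ks ! q))) < \<pi> (inv w (ks ! q))"
    by simp_all
qed

theorem corollary5p7:
  fixes VI VI0 VI1 :: "'v set" and E :: "'v \<Rightarrow> 'v \<Rightarrow> bool"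
    and m :: nat and i :: "nat \<Rightarrow> 'v" and a :: "nat \<Rightarrow> complex"
    and \<pi> :: "nat \<Rightarrow> nat" and ks :: "nat list"
  assumes "bipartite_graph VI VI0 VI1 E"
    and "\<forall>k\<in>{1..m}. i k \<in> VI"
    and "\<pi> permutes {1..m}"
    and "admissible m VI0 VI1 E i a \<pi>"
    and "reduced_expr m \<pi> ks"
  shows "\<forall>p\<in>{1..length ks}.
           admissible m VI0 VI1 E
             (act (word_prod (take p ks)) i) (act (word_prod (take p ks)) a)
             (sk (ks ! (p - 1)))"
proof
  fix p assume "p \<in> {1..length ks}"
  then obtain q where p: "p = Suc q" and q: "q < length ks"
    by (cases p) auto
  let ?w = "word_prod (take q ks)" and ?k = "ks ! q"
  have "inv (word_prod (take p ks)) = inv ?w \<circ> sk ?k"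
    using q by (simp add: p word_prod_take_Suc o_inv_distrib bij_sk bij_word_prod)
  then have "inv (word_prod (take p ks)) ?k = inv ?w (Suc ?k)"
    "inv (word_prod (take p ks)) (Suc ?k) = inv ?w ?k"
    by (simp_all add: sk_def)
  moreover have "switchable VI0 VI1 E i a (inv ?w ?k) (inv ?w (Suc ?k))"
    using assms(5,4) q by (rule reduced_expr_letter_switchable)
  ultimately have "switchable VI0 VI1 E (act (word_prod (take p ks)) i)
      (act (word_prod (take p ks)) a) ?k (Suc ?k)"
    by (simp only: switchable_act switchable_commute[of _ _ _ i a])
  then show "admissible m VI0 VI1 E (act (word_prod (take p ks)) i)
      (act (word_prod (take p ks)) a) (sk (ks ! (p - 1)))"
    unfolding p by (simp add: admissible_sk_if_switchable)
qed

end
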